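(* Assume $\phi$ is convex and decreasing (i.e. $\phi(a)\ge\phi(b)$ whenever $a\le b$), $R_\phi$ is strictly convex with unique minimizer $\mathbf{w}_{\mathrm{sup}}$, and for each $j=1,\dots,U$ the derivatives $\phi'(\mathbf{x}_{\mathrm{u},j}^\top\mathbf{w}_{\mathrm{sup}})$ and $\phi'(-\mathbf{x}_{\mathrm{u},j}^\top\mathbf{w}_{\mathrm{sup}})$ exist. Then there is no $\mathbf{w}_{\mathrm{semi}}\in\mathbb{R}^d$ that satisfies both of the following: (i) $\max_{\mathbf{q}\in[0,1]^U} D_\phi(\mathbf{w}_{\mathrm{semi}},\mathbf{q})\le 0$; (ii) there exists $\mathbf{q}^\ast\in[0,1]^U$ with $D_\phi(\mathbf{w}_{\mathrm{semi}},\mathbf{q}^\ast)<0$.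
   Context: Fix integers $L,U,d\ge 1$. Let $\mathbf{X}\in\mathbb{R}^{L\times d}$ be a matrix whose rows $\mathbf{x}_1^\top,\dots,\mathbf{x}_L^\top$ are the labeled objects, with labels $\mathbf{y}\in\{-1,+1\}^L$. Let $\mathbf{X}_{\mathrm{u}}\in\mathbb{R}^{U\times d}$ be a matrix whose rows $\mathbf{x}_{\mathrm{u},1}^\top,\dots,\mathbf{x}_{\mathrm{u},U}^\top$ are the unlabeled objects. Let $\phi:\mathbb{R}\to\mathbb{R}$ be a loss function, $\Omega:\mathbb{R}^d\to\mathbb{R}$ a convex function and $\lambda\ge 0$. The supervised risk is $R_\phi(\mathbf{w})=\sum_{i=1}^L\phi(y_i\mathbf{x}_i^\top\mathbf{w})+\lambda\Omega(\mathbf{w})$. For responsibilities $\mathbf{q}\in[0,1]^U$ the semi-supervised risk is $R^{\mathrm{semi}}_\phi(\mathbf{w},\mathbf{q})=R_\phi(\mathbf{w})+\sum_{j=1}^U\big[q_j\phi(\mathbf{x}_{\mathrm{u},j}^\top\mathbf{w})+(1-q_j)\phi(-\mathbf{x}_{\mathrm{u},j}^\top\mathbf{w})\big]$. Given the minimizer $\mathbf{w}_{\mathrm{sup}}$ of $R_\phi$, define $D_\phi(\mathbf{w},\mathbf{q})=R^{\mathrm{semi}}_\phi(\mathbf{w},\mathbf{q})-R^{\mathrm{semi}}_\phi(\mathbf{w}_{\mathrm{sup}},\mathbf{q})$. *)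

theory Defs
  imports "HOL-Analysis.Analysis"
begin

definition strictly_convex_on :: "'a::real_vector set \<Rightarrow> ('a \<Rightarrow> real) \<Rightarrow> bool" where
  "strictly_convex_on S f \<longleftrightarrow> convex S \<and>
     (\<forall>x\<in>S. \<forall>y\<in>S. x \<noteq> y \<longrightarrow> (\<forall>t::real. 0 < t \<and> t < 1 \<longrightarrow>
        f ((1 - t) *\<^sub>R x + t *\<^sub>R y) < (1 - t) * f x + t * f y))"

text \<open>Labeled objects X i (i < L) with labels y i, unlabeled objects Xu j (j < U).\<close>
definition R_sup :: "(real \<Rightarrow> real) \<Rightarrow> (real^'d \<Rightarrow> real) \<Rightarrow> real \<Rightarrow> nat
    \<Rightarrow> (nat \<Rightarrow> real^'d) \<Rightarrow> (nat \<Rightarrow> real) \<Rightarrow> real^'d \<Rightarrow> real" where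
  "R_sup \<phi> \<Omega> lam L X y w = (\<Sum>i<L. \<phi> (y i * (X i \<bullet> w))) + lam * \<Omega> w"

definition R_semi :: "(real \<Rightarrow> real) \<Rightarrow> (real^'d \<Rightarrow> real) \<Rightarrow> real \<Rightarrow> nat
    \<Rightarrow> (nat \<Rightarrow> real^'d) \<Rightarrow> (nat \<Rightarrow> real) \<Rightarrow> nat \<Rightarrow> (nat \<Rightarrow> real^'d)
    \<Rightarrow> real^'d \<Rightarrow> (nat \<Rightarrow> real) \<Rightarrow> real" where
  "R_semi \<phi> \<Omega> lam L X y U Xu w q = R_sup \<phi> \<Omega> lam L X y w
     + (\<Sum>j<U. q j * \<phi> (Xu j \<bullet> w) + (1 - q j) * \<phi> (- (Xu j \<bullet> w)))"

definition D_phi :: "(real \<Rightarrow> real) \<Rightarrow> (real^'d \<Rightarrow> real) \<Rightarrow> real \<Rightarrow> nat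
    \<Rightarrow> (nat \<Rightarrow> real^'d) \<Rightarrow> (nat \<Rightarrow> real) \<Rightarrow> nat \<Rightarrow> (nat \<Rightarrow> real^'d)
    \<Rightarrow> real^'d \<Rightarrow> real^'d \<Rightarrow> (nat \<Rightarrow> real) \<Rightarrow> real" where
  "D_phi \<phi> \<Omega> lam L X y U Xu wsup w q =
     R_semi \<phi> \<Omega> lam L X y U Xu w q - R_semi \<phi> \<Omega> lam L X y U Xu wsup q"

definition resp :: "nat \<Rightarrow> (nat \<Rightarrow> real) \<Rightarrow> bool" where
  "resp U q \<longleftrightarrow> (\<forall>j<U. 0 \<le> q j \<and> q j \<le> 1)"

end

theory Submission
  imports Defs
begin

text \<open>Any competitor \<open>w \<noteq> wsup\<close> is strictly worse on the labeled data, and an adversary can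
  label each unlabeled object so that \<open>w\<close> is no better than \<open>wsup\<close> on it either: since the loss is
  decreasing, give object \<open>j\<close> the label \<open>+1\<close> if its margin under \<open>w\<close> is not larger than under
  \<open>wsup\<close>, and \<open>-1\<close> otherwise. So (i) forces \<open>w = wsup\<close>, where \<open>D\<^sub>\<phi>\<close> vanishes, contradicting (ii).\<close>

definition worst_resp :: "(nat \<Rightarrow> 'a::real_inner) \<Rightarrow> 'a \<Rightarrow> 'a \<Rightarrow> nat \<Rightarrow> real" where
  "worst_resp Xu w w' j = (if Xu j \<bullet> w \<le> Xu j \<bullet> w' then 1 else 0)"

lemma resp_worst_resp: "resp U (worst_resp Xu w w')"
  by (simp add: resp_def worst_resp_def)

lemma antimono_worst_label_loss_ge:
  fixes \<phi> :: "real \<Rightarrow> real"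
  assumes "antimono \<phi>" and "q = (if s \<le> t then 1 else 0)"
  shows "q * \<phi> t + (1 - q) * \<phi> (- t) \<le> q * \<phi> s + (1 - q) * \<phi> (- s)"
  using assms by (cases "s \<le> t") (simp_all add: antimonoD)

lemma D_phi_eq:
  "D_phi \<phi> \<Omega> lam L X y U Xu wsup w q =
     R_sup \<phi> \<Omega> lam L X y w - R_sup \<phi> \<Omega> lam L X y wsup
     + (\<Sum>j<U. (q j * \<phi> (Xu j \<bullet> w) + (1 - q j) * \<phi> (- (Xu j \<bullet> w)))
              - (q j * \<phi> (Xu j \<bullet> wsup) + (1 - q j) * \<phi> (- (Xu j \<bullet> wsup))))"
  by (simp add: D_phi_def R_semi_def sum_subtractf)

lemma D_phi_self: "D_phi \<phi> \<Omega> lam L X y U Xu wsup wsup q = 0"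
  by (simp add: D_phi_def)

lemma D_phi_worst_resp_ge:
  assumes "antimono \<phi>"
  shows "R_sup \<phi> \<Omega> lam L X y w - R_sup \<phi> \<Omega> lam L X y wsup
           \<le> D_phi \<phi> \<Omega> lam L X y U Xu wsup w (worst_resp Xu w wsup)"
  unfolding D_phi_eq
  using antimono_worst_label_loss_ge[OF assms]
  by (simp add: sum_nonneg worst_resp_def)

theorem theorem2:
  fixes \<phi> :: "real \<Rightarrow> real" and \<Omega> :: "real^'d \<Rightarrow> real" and lam :: real
    and L U :: nat and X Xu :: "nat \<Rightarrow> real^'d" and y :: "nat \<Rightarrow> real"
    and wsup :: "real^'d"
  assumes "L \<ge> 1" and "U \<ge> 1"
    and "\<forall>i<L. y i = -1 \<or> y i = 1"
    and "convex_on UNIV \<Omega>" and "lam \<ge> 0"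
    and "convex_on UNIV \<phi>"
    and "\<forall>a b. a \<le> b \<longrightarrow> \<phi> b \<le> \<phi> a"
    and "strictly_convex_on UNIV (R_sup \<phi> \<Omega> lam L X y)"
    and "\<forall>w. w \<noteq> wsup \<longrightarrow> R_sup \<phi> \<Omega> lam L X y wsup < R_sup \<phi> \<Omega> lam L X y w"
    and "\<forall>j<U. \<phi> differentiable at (Xu j \<bullet> wsup) \<and> \<phi> differentiable at (- (Xu j \<bullet> wsup))"
  shows "\<not> (\<exists>wsemi :: real^'d.
            (\<forall>q. resp U q \<longrightarrow> D_phi \<phi> \<Omega> lam L X y U Xu wsup wsemi q \<le> 0) \<and>
            (\<exists>qs. resp U qs \<and> D_phi \<phi> \<Omega> lam L X y U Xu wsup wsemi qs < 0))"
proof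
  assume "\<exists>wsemi :: real^'d.
            (\<forall>q. resp U q \<longrightarrow> D_phi \<phi> \<Omega> lam L X y U Xu wsup wsemi q \<le> 0) \<and>
            (\<exists>qs. resp U qs \<and> D_phi \<phi> \<Omega> lam L X y U Xu wsup wsemi qs < 0)"
  then obtain w qs where safe: "\<forall>q. resp U q \<longrightarrow> D_phi \<phi> \<Omega> lam L X y U Xu wsup w q \<le> 0"
    and improving: "D_phi \<phi> \<Omega> lam L X y U Xu wsup w qs < 0"
    by blast
  have "w \<noteq> wsup"
    using improving by (auto simp: D_phi_self)
  then have "0 < R_sup \<phi> \<Omega> lam L X y w - R_sup \<phi> \<Omega> lam L X y wsup"
    using assms(9) by simp
  also have "\<dots> \<le> D_phi \<phi> \<Omega> lam L X y U Xu wsup w (worst_resp Xu w wsup)"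
    using assms(7) by (intro D_phi_worst_resp_ge) (simp add: antimono_def)
  also have "\<dots> \<le> 0"
    using safe resp_worst_resp by blast
  finally show False
    by simp
qed

end
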